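(* Let $n\ge 2$, let $a_1,\dots,a_n$ be real numbers, and put $C(t)=\sum_{j=1}^n a_j\cos jt$, $S(t)=\sum_{j=1}^n a_j\sin jt$. Suppose $S(t_1)=0$ for some $t_1\in(0,\pi)$. Then there exist unique real numbers $a^{(1)}_1,\dots,a^{(1)}_{n-1}$ such that for all real $t$ $$S(t)=(\cos t-\cos t_1)\sum_{j=1}^{n-1}a^{(1)}_j\sin jt,\qquad C(t)=-\frac{a^{(1)}_1}{2}+(\cos t-\cos t_1)\sum_{j=1}^{n-1}a^{(1)}_j\cos jt .$$ *)

theory Defs
  imports "HOL-Analysis.Analysis"
begin

end

theory Submission
  imports Defs "HOL-Computational_Algebra.Polynomial"
begin

text \<open>
  Multiplying a trigonometric sum by \<open>2 (cos t - c)\<close> and using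
  \<open>2 cos t f(jt) = f((j+1)t) + f((j-1)t)\<close> (for \<open>f = sin, cos\<close>) turns the
  coefficient sequence \<open>b\<close> into \<open>b (k-1) + b (k+1) - 2 c b k\<close>. Hence the
  quotient coefficients are found by solving this second-order recurrence
  backwards from \<open>b n = b (n+1) = 0\<close>; what is left over is a single term
  \<open>b 0 sin t\<close>, which must vanish because \<open>S(t\<^sub>1) = 0\<close> and \<open>sin t\<^sub>1 > 0\<close>.
  Uniqueness holds since \<open>\<Sum> d\<^sub>j e\<^sup>i\<^sup>j\<^sup>t\<close> is a polynomial in \<open>e\<^sup>i\<^sup>t\<close> vanishing on an arc.
\<close>

lemma cos_minus_const_mult_sum:
  fixes f :: "real \<Rightarrow> real" and b :: "nat \<Rightarrow> real"
  assumes f_rec: "\<And>x. f (x + t) + f (x - t) = 2 * cos t * f x"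
  shows "2 * (cos t - c) * (\<Sum>j=1..m. b j * f (real j * t)) =
    (\<Sum>k=1..m. (b (k-1) + b (k+1) - 2 * c * b k) * f (real k * t))
    + b m * f ((real m + 1) * t) - b (m+1) * f (real m * t) + b 1 * f 0 - b 0 * f t"
proof (induction m)
  case 0
  then show ?case by simp
next
  case (Suc m)
  have "b (Suc m) * (f ((real m + 2) * t) + f (real m * t))
      = b (Suc m) * (2 * cos t * f ((real m + 1) * t))"
    using f_rec[of "(real m + 1) * t"] by (simp add: algebra_simps)
  moreover have "real (Suc m) + 1 = real m + 2" "real (Suc m) = real m + 1" "m + 2 = Suc (Suc m)"
    by simp_all
  ultimately show ?case
    using Suc.IH by (simp add: algebra_simps)
qed

lemma cos_minus_const_mult_sum_recurrence:
  fixes f :: "real \<Rightarrow> real" and a b :: "nat \<Rightarrow> real"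
  assumes f_rec: "\<And>x. f (x + t) + f (x - t) = 2 * cos t * f x"
    and "1 \<le> n" "b n = 0" "b (n+1) = 0"
    and b_rec: "\<And>k. k \<in> {1..n} \<Longrightarrow> b (k-1) + b (k+1) - 2 * c * b k = 2 * a k"
  shows "2 * (cos t - c) * (\<Sum>j=1..n-1. b j * f (real j * t)) =
    2 * (\<Sum>j=1..n. a j * f (real j * t)) + b 1 * f 0 - b 0 * f t"
proof -
  have "(\<Sum>j=1..n-1. b j * f (real j * t)) = (\<Sum>j=1..n. b j * f (real j * t))"
    using \<open>1 \<le> n\<close> \<open>b n = 0\<close> by (cases n) (simp_all add: sum.cl_ivl_Suc)
  moreover have "(\<Sum>k=1..n. (b (k-1) + b (k+1) - 2 * c * b k) * f (real k * t))
      = 2 * (\<Sum>j=1..n. a j * f (real j * t))"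
    unfolding sum_distrib_left by (rule sum.cong) (use b_rec in auto)
  ultimately show ?thesis
    using cos_minus_const_mult_sum[OF f_rec, of c b n] \<open>b n = 0\<close> \<open>b (n+1) = 0\<close> by simp
qed

function quotient_coeff :: "real \<Rightarrow> (nat \<Rightarrow> real) \<Rightarrow> nat \<Rightarrow> nat \<Rightarrow> real" where
  "quotient_coeff c a n j =
    (if n \<le> j then 0
     else 2 * a (j+1) + 2 * c * quotient_coeff c a n (j+1) - quotient_coeff c a n (j+2))"
  by auto
termination by (relation "Wellfounded.measure (\<lambda>(c, a, n, j). n - j)") auto

declare quotient_coeff.simps [simp del]

lemma quotient_coeff_eq_0: "n \<le> j \<Longrightarrow> quotient_coeff c a n j = 0"
  by (simp add: quotient_coeff.simps)

lemma quotient_coeff_rec: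
  assumes "k \<in> {1..n}"
  shows "quotient_coeff c a n (k-1) + quotient_coeff c a n (k+1) - 2 * c * quotient_coeff c a n k
    = 2 * a k"
proof -
  have "quotient_coeff c a n (k-1) =
      2 * a k + 2 * c * quotient_coeff c a n k - quotient_coeff c a n (k+1)"
    using assms by (subst quotient_coeff.simps) (auto simp: add_2_eq_Suc')
  then show ?thesis by simp
qed

lemma sin_add_plus_sin_diff:
  fixes x t :: "'a::{real_normed_field,banach}"
  shows "sin (x + t) + sin (x - t) = 2 * cos t * sin x"
  by (simp add: sin_add sin_diff)

lemma cos_add_plus_cos_diff:
  fixes x t :: "'a::{real_normed_field,banach}"
  shows "cos (x + t) + cos (x - t) = 2 * cos t * cos x"
  by (simp add: cos_add cos_diff)

lemma quotient_coeff_mult_sum: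
  fixes f :: "real \<Rightarrow> real"
  assumes "\<And>x. f (x + t) + f (x - t) = 2 * cos t * f x" and "1 \<le> n"
  shows "2 * (cos t - c) * (\<Sum>j=1..n-1. quotient_coeff c a n j * f (real j * t)) =
    2 * (\<Sum>j=1..n. a j * f (real j * t))
    + quotient_coeff c a n 1 * f 0 - quotient_coeff c a n 0 * f t"
  using assms by (intro cos_minus_const_mult_sum_recurrence quotient_coeff_rec)
    (simp_all add: quotient_coeff_eq_0)

lemma quotient_coeff_0_eq_0:
  assumes "1 \<le> n" "0 < t1" "t1 < pi" "(\<Sum>j=1..n. a j * sin (real j * t1)) = 0"
  shows "quotient_coeff (cos t1) a n 0 = 0"
proof -
  have "quotient_coeff (cos t1) a n 0 * sin t1 = 0"
    using quotient_coeff_mult_sum[OF sin_add_plus_sin_diff \<open>1 \<le> n\<close>, of t1 "cos t1" a] assms(4)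
    by simp
  with sin_gt_zero[OF assms(2,3)] show ?thesis by simp
qed

lemma quotient_coeff_factorization:
  assumes "1 \<le> n" "quotient_coeff c a n 0 = 0"
  shows "(\<Sum>j=1..n. a j * sin (real j * t)) =
      (cos t - c) * (\<Sum>j=1..n-1. quotient_coeff c a n j * sin (real j * t))"
    and "(\<Sum>j=1..n. a j * cos (real j * t)) = - quotient_coeff c a n 1 / 2 +
      (cos t - c) * (\<Sum>j=1..n-1. quotient_coeff c a n j * cos (real j * t))"
proof -
  have "2 * ((cos t - c) * (\<Sum>j=1..n-1. quotient_coeff c a n j * f (real j * t))) =
      2 * (\<Sum>j=1..n. a j * f (real j * t)) + quotient_coeff c a n 1 * f 0"
    if "\<And>x. f (x + t) + f (x - t) = 2 * cos t * f x" for f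
    using quotient_coeff_mult_sum[OF that \<open>1 \<le> n\<close>, of c a] assms(2)
    by (simp add: mult.assoc del: right_diff_distrib_numeral)
  from this[OF sin_add_plus_sin_diff] this[OF cos_add_plus_cos_diff] show
    "(\<Sum>j=1..n. a j * sin (real j * t)) =
      (cos t - c) * (\<Sum>j=1..n-1. quotient_coeff c a n j * sin (real j * t))"
    "(\<Sum>j=1..n. a j * cos (real j * t)) = - quotient_coeff c a n 1 / 2 +
      (cos t - c) * (\<Sum>j=1..n-1. quotient_coeff c a n j * cos (real j * t))"
    by simp_all
qed

lemma trig_sum_coeff_eq_0:
  fixes d :: "nat \<Rightarrow> real"
  assumes "0 \<le> u" "u < v" "v \<le> pi"
    and vanish: "\<And>t. t \<in> {u<..<v} \<Longrightarrow>
      (\<Sum>j=1..m. d j * cos (real j * t)) = 0 \<and> (\<Sum>j=1..m. d j * sin (real j * t)) = 0"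
    and "k \<in> {1..m}"
  shows "d k = 0"
proof -
  define p where "p = (\<Sum>j=1..m. monom (complex_of_real (d j)) j)"
  have "poly p (cis t) = 0" if "t \<in> {u<..<v}" for t
  proof -
    have "poly p (cis t) = (\<Sum>j=1..m. complex_of_real (d j) * cis (real j * t))"
      by (simp add: p_def poly_sum poly_monom Complex.DeMoivre)
    then show ?thesis
      using vanish[OF that] by (simp add: complex_eq_iff Re_sum Im_sum)
  qed
  then have "cis ` {u<..<v} \<subseteq> {z. poly p z = 0}"
    by auto
  moreover have "inj_on cis {u<..<v}"
  proof (rule inj_onI)
    fix x y assume "x \<in> {u<..<v}" "y \<in> {u<..<v}" "cis x = cis y"
    then show "x = y"
      using assms(1,3) cos_inj_pi[of x y] by (metis cis.sel(1) greaterThanLessThan_iff less_eq_real_def order.strict_trans2)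
  qed
  then have "infinite (cis ` {u<..<v})"
    using \<open>u < v\<close> by (simp add: finite_image_iff)
  ultimately have "p = 0"
    using poly_roots_finite finite_subset by blast
  then have "coeff p k = 0" by simp
  then show ?thesis
    using \<open>k \<in> {1..m}\<close> by (simp add: p_def coeff_sum coeff_monom)
qed

lemma cos_minus_cos_quotient_unique:
  fixes s c :: "real \<Rightarrow> real" and b b' :: "nat \<Rightarrow> real"
  assumes "0 < t1" "t1 < pi"
    and quot: "\<forall>t. s t = (cos t - cos t1) * (\<Sum>j=1..m. b j * sin (real j * t)) \<and>
      c t = - b 1 / 2 + (cos t - cos t1) * (\<Sum>j=1..m. b j * cos (real j * t))"
    and quot': "\<forall>t. s t = (cos t - cos t1) * (\<Sum>j=1..m. b' j * sin (real j * t)) \<and>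
      c t = - b' 1 / 2 + (cos t - cos t1) * (\<Sum>j=1..m. b' j * cos (real j * t))"
    and "k \<in> {1..m}"
  shows "b' k = b k"
proof -
  have "c t1 = - b 1 / 2" "c t1 = - b' 1 / 2"
    using quot[rule_format, of t1] quot'[rule_format, of t1] by simp_all
  then have "b' 1 = b 1" by simp
  have vanish: "(\<Sum>j=1..m. (b' j - b j) * cos (real j * t)) = 0 \<and>
      (\<Sum>j=1..m. (b' j - b j) * sin (real j * t)) = 0" if "t \<in> {t1<..<pi}" for t
  proof -
    have "cos t - cos t1 \<noteq> 0"
      using that \<open>0 < t1\<close> cos_monotone_0_pi[of t1 t] by auto
    moreover have "(cos t - cos t1) * (\<Sum>j=1..m. b' j * cos (real j * t)) =
        (cos t - cos t1) * (\<Sum>j=1..m. b j * cos (real j * t))"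
      "(cos t - cos t1) * (\<Sum>j=1..m. b' j * sin (real j * t)) =
        (cos t - cos t1) * (\<Sum>j=1..m. b j * sin (real j * t))"
      using quot[rule_format, of t] quot'[rule_format, of t] \<open>b' 1 = b 1\<close> by auto
    ultimately have "(\<Sum>j=1..m. b' j * cos (real j * t)) = (\<Sum>j=1..m. b j * cos (real j * t))"
        "(\<Sum>j=1..m. b' j * sin (real j * t)) = (\<Sum>j=1..m. b j * sin (real j * t))"
      using mult_left_cancel by blast+
    then show ?thesis
      by (simp add: left_diff_distrib sum_subtractf)
  qed
  have "b' k - b k = 0"
    using \<open>0 < t1\<close> by (intro trig_sum_coeff_eq_0[OF _ \<open>t1 < pi\<close> order_refl vanish \<open>k \<in> {1..m}\<close>]) simp
  then show ?thesis by simp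
qed

theorem lemma2:
  fixes n :: nat and a :: "nat \<Rightarrow> real" and t1 :: real
  assumes "n \<ge> 2"
    and "0 < t1" and "t1 < pi"
    and "(\<Sum>j=1..n. a j * sin (real j * t1)) = 0"
  shows "\<exists>b :: nat \<Rightarrow> real.
           (\<forall>t::real.
              (\<Sum>j=1..n. a j * sin (real j * t)) =
                (cos t - cos t1) * (\<Sum>j=1..n-1. b j * sin (real j * t)) \<and>
              (\<Sum>j=1..n. a j * cos (real j * t)) =
                - b 1 / 2 + (cos t - cos t1) * (\<Sum>j=1..n-1. b j * cos (real j * t)))
         \<and> (\<forall>b' :: nat \<Rightarrow> real.
              (\<forall>t::real.
                 (\<Sum>j=1..n. a j * sin (real j * t)) =
                   (cos t - cos t1) * (\<Sum>j=1..n-1. b' j * sin (real j * t)) \<and>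
                 (\<Sum>j=1..n. a j * cos (real j * t)) =
                   - b' 1 / 2 + (cos t - cos t1) * (\<Sum>j=1..n-1. b' j * cos (real j * t)))
              \<longrightarrow> (\<forall>j\<in>{1..n-1}. b' j = b j))"
proof -
  define b where "b = quotient_coeff (cos t1) a n"
  have "1 \<le> n" using \<open>n \<ge> 2\<close> by simp
  have "b 0 = 0"
    unfolding b_def using \<open>1 \<le> n\<close> assms(2-4) by (rule quotient_coeff_0_eq_0)
  have quot: "\<forall>t.
      (\<Sum>j=1..n. a j * sin (real j * t)) = (cos t - cos t1) * (\<Sum>j=1..n-1. b j * sin (real j * t)) \<and>
      (\<Sum>j=1..n. a j * cos (real j * t)) =
        - b 1 / 2 + (cos t - cos t1) * (\<Sum>j=1..n-1. b j * cos (real j * t))"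
    using quotient_coeff_factorization[OF \<open>1 \<le> n\<close> \<open>b 0 = 0\<close>[unfolded b_def]] unfolding b_def by blast
  show ?thesis
    using quot cos_minus_cos_quotient_unique[OF assms(2,3) quot] by blast
qed

end
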